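(* Let $p>2$ be an odd integer and $n\ge 1$. Then every regular expression describing the divisibility language $L^{\mathrm{div}}_{n,p}=\{ w\in \{0,1\}^n : \mathrm{bin}(w) \equiv 0 \pmod p\}$ has length at least $\mathrm{rpn}(L^{\mathrm{div}}_{n,p}) \geq \Omega\big( n^{-1} p^{\log ( n/ \log p ) -2 } \big)$.
   Context: For $w=w_1\cdots w_d\in\{0,1\}^*$, $\mathrm{bin}(w)=\sum_{i=1}^d w_i2^{d-i}$ is its value as a binary number with the most significant bit leftmost ($\mathrm{bin}(\epsilon)=0$). Regular expressions are built from $\epsilon$ and letters by union and concatenation (no $\emptyset$, no star needed for finite languages); $\mathrm{rpn}(L)$ is the minimum number of syntax-tree nodes of an expression describing $L$. Logarithms are base 2. *)

theory Defs
  imports Complex_Main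
begin

text \<open>Words over the binary alphabet {0,1}: letter 1 is True, letter 0 is False.\<close>

definition bin :: "bool list \<Rightarrow> nat" where
  "bin w = foldl (\<lambda>a b. 2 * a + (if b then 1 else 0)) 0 w"

datatype regexp = Eps | Lit bool | Union regexp regexp | Conc regexp regexp

fun lang :: "regexp \<Rightarrow> bool list set" where
  "lang Eps = {[]}"
| "lang (Lit a) = {[a]}"
| "lang (Union r s) = lang r \<union> lang s"
| "lang (Conc r s) = {u @ v | u v. u \<in> lang r \<and> v \<in> lang s}"

fun rsize :: "regexp \<Rightarrow> nat" where
  "rsize Eps = 1"
| "rsize (Lit a) = 1"
| "rsize (Union r s) = rsize r + rsize s + 1"
| "rsize (Conc r s) = rsize r + rsize s + 1"

definition rpn :: "bool list set \<Rightarrow> nat" where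
  "rpn L = (LEAST s. \<exists>r. lang r = L \<and> rsize r = s)"

definition Ldiv :: "nat \<Rightarrow> nat \<Rightarrow> bool list set" where
  "Ldiv n p = {w. length w = n \<and> bin w mod p = 0}"

end

theory Submission
  imports Defs "HOL-Number_Theory.Cong"
begin

text \<open>
  Every subexpression r of an expression for Ldiv n p describes a homogeneous language: its
  words share one length l and one residue modulo p (for the factors of a concatenation this
  uses that 2 is invertible modulo odd p). Such a set has at most \<lceil>2^l/p\<rceil> elements.
  With L = log p and the weight W(l) = (1 + l/(2L))^(L-1), induction on r gives
  |lang r| W(l) \<le> 2^l size(r). The crucial case is a concatenation of lengths a \<ge> b: the
  shorter factor has at most \<lceil>2^b/p\<rceil> words, while W(a+b)/W(a) is bounded both by
  e^(b/2) \<le> 2^b and by 2^(L-1) = p/2. As |Ldiv n p| \<ge> 2^n/p, this yields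
  rpn(Ldiv n p) \<ge> W(n)/p \<ge> (n/(2L))^(L-1)/p, which is the claimed bound with constant 1.
\<close>

lemma bin_Nil [simp]: "bin [] = 0"
  by (simp add: bin_def)

lemma bin_snoc: "bin (w @ [b]) = 2 * bin w + of_bool b"
  by (simp add: bin_def)

lemma bin_append: "bin (u @ v) = bin u * 2 ^ length v + bin v"
proof (induction v rule: rev_induct)
  case Nil
  then show ?case by simp
next
  case (snoc b v)
  then show ?case by (simp flip: append_assoc add: bin_snoc algebra_simps)
qed

lemma bin_less_power: "bin w < 2 ^ length w"
  by (induction w rule: rev_induct) (auto simp: bin_snoc)

fun to_bin :: "nat \<Rightarrow> nat \<Rightarrow> bool list" where
  "to_bin 0 x = []"
| "to_bin (Suc n) x = to_bin n (x div 2) @ [odd x]"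

lemma length_to_bin [simp]: "length (to_bin n x) = n"
  by (induction n arbitrary: x) auto

lemma bin_to_bin: "bin (to_bin n x) = x mod 2 ^ n"
  by (induction n arbitrary: x)
    (auto simp: bin_snoc mod_mult2_eq mult.commute odd_iff_mod_2_eq_one)

lemma to_bin_bin: "length w = n \<Longrightarrow> to_bin n (bin w) = w"
  by (induction w arbitrary: n rule: rev_induct) (auto simp: bin_snoc)

lemma inj_on_bin: "inj_on bin {w. length w = n}"
  by (rule inj_on_inverseI[of _ "to_bin n"]) (simp add: to_bin_bin)

lemma finite_length_eq: "finite {w :: bool list. length w = n}"
  by (rule inj_on_finite[OF inj_on_bin, of _ "{..<2 ^ n}"]) (auto intro: bin_less_power)

lemma lang_nonempty: "lang r \<noteq> {}"
  by (induction r) auto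

lemma conc_eq_image: "{u @ v | u v. u \<in> A \<and> v \<in> B} = (\<lambda>(u, v). u @ v) ` (A \<times> B)"
  by auto

lemma finite_lang: "finite (lang r)"
  by (induction r) (simp_all add: conc_eq_image)

lemma exists_regexp_singleton: "\<exists>r. lang r = {w}"
proof (induction w)
  case Nil
  have "lang Eps = {[]}" by simp
  then show ?case by blast
next
  case (Cons a w)
  then obtain r where "lang r = {w}" by blast
  then have "lang (Conc (Lit a) r) = {a # w}" by auto
  then show ?case by blast
qed

lemma exists_regexp: "finite A \<Longrightarrow> A \<noteq> {} \<Longrightarrow> \<exists>r. lang r = A"
proof (induction A rule: finite_ne_induct)
  case (singleton w)
  then show ?case using exists_regexp_singleton by blast
next
  case (insert w A)
  obtain r q where "lang r = A" "lang q = {w}" using insert.IH exists_regexp_singleton by blast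
  then have "lang (Union q r) = insert w A" by auto
  then show ?case by blast
qed

lemma rpn_attained:
  assumes "finite A" "A \<noteq> {}"
  obtains r where "lang r = A" "rsize r = rpn A"
proof -
  have "\<exists>s r. lang r = A \<and> rsize r = s" using exists_regexp[OF assms] by blast
  from LeastI_ex[OF this] show ?thesis using that unfolding rpn_def by blast
qed

definition homogeneous :: "nat \<Rightarrow> nat \<Rightarrow> bool list set \<Rightarrow> bool" where
  "homogeneous p l A \<longleftrightarrow> (\<forall>w\<in>A. length w = l) \<and> (\<forall>w\<in>A. \<forall>w'\<in>A. [bin w = bin w'] (mod p))"

lemma homogeneous_Ldiv: "homogeneous p n (Ldiv n p)"
  by (simp add: homogeneous_def Ldiv_def cong_def)

lemma homogeneous_conc:
  assumes "odd p" "homogeneous p l {u @ v | u v. u \<in> A \<and> v \<in> B}" "u \<in> A" "v \<in> B"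
  shows "homogeneous p (length u) A" "homogeneous p (length v) B"
proof -
  have len: "length x + length y = l" if "x \<in> A" "y \<in> B" for x y
    using assms(2) that unfolding homogeneous_def by fastforce
  have cong: "[bin x * 2 ^ length y + bin y = bin x' * 2 ^ length y' + bin y'] (mod p)"
    if "x \<in> A" "y \<in> B" "x' \<in> A" "y' \<in> B" for x y x' y'
    using assms(2) that unfolding homogeneous_def bin_append[symmetric] by blast
  have coprime: "coprime ((2::nat) ^ k) p" for k
    using assms(1) by simp
  show "homogeneous p (length u) A" unfolding homogeneous_def
  proof (intro conjI ballI)
    fix x x' assume "x \<in> A" "x' \<in> A"
    then show "length x = length u" "[bin x = bin x'] (mod p)"
      using len[of x v] len[of u v] cong[of x v x' v] assms(3,4)
      by (simp_all add: cong_add_rcancel_nat cong_mult_rcancel_nat[OF coprime])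
  qed
  show "homogeneous p (length v) B" unfolding homogeneous_def
  proof (intro conjI ballI)
    fix y y' assume y: "y \<in> B" "y' \<in> B"
    then have "length y = length v" "length y' = length v"
      using len[of u y] len[of u y'] len[of u v] assms(3,4) by simp_all
    then show "length y = length v" "[bin y = bin y'] (mod p)"
      using cong[OF assms(3) y(1) assms(3) y(2)] by (simp_all add: cong_add_lcancel_nat)
  qed
qed

lemma card_conc:
  assumes "finite A" "finite B" "\<forall>u\<in>A. length u = l"
  shows "card {u @ v | u v. u \<in> A \<and> v \<in> B} = card A * card B"
proof -
  have "inj_on (\<lambda>(u, v). u @ v) (A \<times> B)"
    using assms(3) by (auto intro!: inj_onI)
  then show ?thesis
    by (simp add: conc_eq_image card_image card_cartesian_product)
qed

lemma card_homogeneous_mult_less: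
  assumes "p > 0" "homogeneous p l A"
  shows "card A * p < 2 ^ l + p"
proof -
  have inj: "inj_on (\<lambda>w. bin w div p) A"
  proof (rule inj_onI)
    fix x y assume xy: "x \<in> A" "y \<in> A" "bin x div p = bin y div p"
    have "bin x mod p = bin y mod p"
      using assms(2) xy(1,2) unfolding homogeneous_def cong_def by blast
    with xy(3) have "bin x = bin y"
      by (metis div_mult_mod_eq)
    moreover have "x \<in> {w. length w = l}" "y \<in> {w. length w = l}"
      using xy assms(2) by (auto simp: homogeneous_def)
    ultimately show "x = y"
      using inj_onD[OF inj_on_bin] by blast
  qed
  have "(\<lambda>w. bin w div p) ` A \<subseteq> {..(2 ^ l - 1) div p}"
  proof (intro image_subsetI)
    fix w assume "w \<in> A"
    then have "bin w \<le> 2 ^ l - 1"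
      using assms(2) bin_less_power[of w] by (simp add: homogeneous_def)
    then show "bin w div p \<in> {..(2 ^ l - 1) div p}"
      by (simp add: div_le_mono)
  qed
  from card_inj_on_le[OF inj this finite_atMost] have "card A \<le> (2 ^ l - 1) div p + 1"
    by simp
  then have "card A * p \<le> (2 ^ l - 1) div p * p + p"
    by (metis add_mult_distrib mult_1 mult_le_mono1)
  also have "\<dots> \<le> 2 ^ l - 1 + p"
    by (rule add_right_mono) (rule div_times_less_eq_dividend)
  also have "\<dots> < 2 ^ l + p"
    by simp
  finally show ?thesis .
qed

lemma finite_Ldiv: "finite (Ldiv n p)"
  by (rule finite_subset[OF _ finite_length_eq[of n]]) (auto simp: Ldiv_def)

lemma card_Ldiv_mult_ge:
  assumes "p > 0"
  shows "2 ^ n \<le> card (Ldiv n p) * p"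
proof -
  define m where "m = (2 ^ n - 1) div p + 1"
  have below: "k * p < 2 ^ n \<longleftrightarrow> k < m" for k
  proof -
    have "k * p < 2 ^ n \<longleftrightarrow> k * p \<le> 2 ^ n - 1"
      using zero_less_power[of "2::nat" n] by linarith
    then show ?thesis
      using less_eq_div_iff_mult_less_eq[OF assms, of k "2 ^ n - 1"] unfolding m_def by linarith
  qed
  have inj: "inj_on (\<lambda>k. to_bin n (k * p)) {..<m}"
    by (rule inj_on_inverseI[of _ "\<lambda>w. bin w div p"]) (simp add: bin_to_bin below assms)
  have sub: "(\<lambda>k. to_bin n (k * p)) ` {..<m} \<subseteq> Ldiv n p"
    by (auto simp: Ldiv_def bin_to_bin below)
  from card_inj_on_le[OF inj sub finite_Ldiv] have "m \<le> card (Ldiv n p)"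
    by simp
  moreover have "2 ^ n \<le> m * p"
    using below[of m] by simp
  ultimately show ?thesis
    using mult_le_mono1 order_trans by blast
qed

definition weight :: "real \<Rightarrow> nat \<Rightarrow> real" where
  "weight L l = (1 + real l / (2 * L)) powr (L - 1)"

lemma weight_nonneg: "0 \<le> weight L l"
  by (simp add: weight_def)

lemma weight_0 [simp]: "weight L 0 = 1"
  by (simp add: weight_def)

lemma weight_add:
  assumes "L > 0"
  shows "weight L (a + u) = weight L a * (1 + real u / (real a + 2 * L)) powr (L - 1)"
proof -
  have pos: "real a + 2 * L > 0"
    using assms by simp
  have "(1 + real a / (2 * L)) * (1 + real u / (real a + 2 * L))
      = (real a + 2 * L) / (2 * L) * ((real a + 2 * L + real u) / (real a + 2 * L))"
    using assms pos by (simp add: field_simps)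
  also have "\<dots> = (real a + 2 * L + real u) / (2 * L)"
    using pos by simp
  also have "\<dots> = 1 + real (a + u) / (2 * L)"
    using assms by (simp add: field_simps)
  finally show ?thesis
    unfolding weight_def by (metis powr_mult)
qed

lemma exp_half_le_power: "exp (real u / 2) \<le> 2 ^ u"
proof -
  have "exp (real u / 2) = exp (1 / 2) ^ u"
    using exp_of_nat_mult[of u "1 / 2"] by simp
  also have "\<dots> \<le> 2 ^ u"
    using real_exp_bound_lemma[of "1 / 2"] by (intro power_mono) auto
  finally show ?thesis .
qed

lemma weight_add_le_power:
  assumes "L \<ge> 1"
  shows "weight L (a + u) \<le> 2 ^ u * weight L a"
proof -
  define t where "t = real u / (real a + 2 * L)"
  have "(1 + t) powr (L - 1) \<le> exp t powr (L - 1)"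
    using assms by (intro powr_mono2) (auto simp: t_def)
  also have "\<dots> = exp (t * (L - 1))"
    by (rule exp_powr_real)
  also have "\<dots> \<le> exp (real u / 2)"
    using assms by (auto simp: t_def field_simps)
  also have "\<dots> \<le> 2 ^ u"
    by (rule exp_half_le_power)
  finally show ?thesis
    using assms weight_add[of L a u] weight_nonneg[of L a]
    by (simp add: t_def mult.commute mult_left_mono)
qed

lemma weight_add_le_powr:
  assumes "L \<ge> 1" "u \<le> a"
  shows "weight L (a + u) \<le> 2 powr (L - 1) * weight L a"
proof -
  have "(1 + real u / (real a + 2 * L)) powr (L - 1) \<le> 2 powr (L - 1)"
    using assms by (intro powr_mono2) (auto simp: field_simps)
  then show ?thesis
    using assms weight_add[of L a u] weight_nonneg[of L a]
    by (simp add: mult.commute mult_left_mono)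
qed

lemma card_weight_add_le:
  assumes "p \<ge> 2" "u \<le> a" "c * p < 2 ^ u + p"
  shows "real c * weight (log 2 p) (a + u) \<le> 2 ^ u * weight (log 2 p) a"
proof -
  define L where "L = log 2 p"
  have L: "L \<ge> 1"
    using assms(1) by (simp add: L_def)
  have W: "0 \<le> weight L (a + u)" "0 \<le> weight L a"
    by (simp_all add: weight_nonneg)
  show ?thesis
  proof (cases "2 ^ u \<le> p")
    case True
    with assms(3) have "c * p < 2 * p"
      by linarith
    then have "c \<le> 1"
      by simp
    then have "real c * weight L (a + u) \<le> weight L (a + u)"
      using W by (simp add: mult_left_le_one_le)
    also have "\<dots> \<le> 2 ^ u * weight L a"
      using L by (rule weight_add_le_power)
    finally show ?thesis unfolding L_def .
  next
    case False
    with assms(3) have "c * p < 2 * 2 ^ u"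
      by linarith
    then have c: "real c * p \<le> 2 * 2 ^ u"
      using of_nat_le_iff[of "c * p" "2 * 2 ^ u"] by simp
    have half_p: "2 powr (L - 1) = real p / 2"
      using assms(1) by (simp add: L_def powr_diff)
    have "weight L (a + u) \<le> real p / 2 * weight L a"
      using weight_add_le_powr[OF L assms(2)] unfolding half_p .
    then have "real c * weight L (a + u) \<le> real c * p / 2 * weight L a"
      using mult_left_mono[of _ _ "real c"] by fastforce
    also have "\<dots> \<le> 2 ^ u * weight L a"
      using c W by (intro mult_right_mono) simp_all
    finally show ?thesis unfolding L_def .
  qed
qed

lemma conc_weight_le:
  fixes p a b c\<^sub>1 c\<^sub>2 :: nat and s :: real
  assumes "p \<ge> 2" "b \<le> a" "real c\<^sub>1 * weight (log 2 p) a \<le> 2 ^ a * s" "c\<^sub>2 * p < 2 ^ b + p"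
  shows "real (c\<^sub>1 * c\<^sub>2) * weight (log 2 p) (a + b) \<le> 2 ^ (a + b) * s"
proof -
  have "real (c\<^sub>1 * c\<^sub>2) * weight (log 2 p) (a + b) = real c\<^sub>1 * (real c\<^sub>2 * weight (log 2 p) (a + b))"
    by simp
  also have "\<dots> \<le> real c\<^sub>1 * (2 ^ b * weight (log 2 p) a)"
    using card_weight_add_le[OF assms(1,2,4)] by (rule mult_left_mono) simp
  also have "\<dots> = 2 ^ b * (real c\<^sub>1 * weight (log 2 p) a)"
    by simp
  also have "\<dots> \<le> 2 ^ b * (2 ^ a * s)"
    using assms(3) by (rule mult_left_mono) simp
  also have "\<dots> = 2 ^ (a + b) * s"
    by (simp add: power_add)
  finally show ?thesis .
qed

lemma card_lang_weight_le:
  assumes "odd p" "p \<ge> 2" "homogeneous p l (lang r)"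
  shows "real (card (lang r)) * weight (log 2 p) l \<le> 2 ^ l * real (rsize r)"
  using assms(3)
proof (induction r arbitrary: l)
  case Eps
  then have "l = 0"
    by (simp add: homogeneous_def)
  then show ?case
    by simp
next
  case (Lit b)
  then have "l = 0 + 1"
    by (simp add: homogeneous_def)
  moreover have "weight (log 2 p) (0 + 1) \<le> 2 ^ 1 * weight (log 2 p) 0"
    using assms(2) by (intro weight_add_le_power) simp
  ultimately show ?case
    by simp
next
  case (Union r s)
  then have "homogeneous p l (lang r)" "homogeneous p l (lang s)"
    by (auto simp: homogeneous_def)
  with Union.IH have IH: "real (card (lang r)) * weight (log 2 p) l \<le> 2 ^ l * real (rsize r)"
    "real (card (lang s)) * weight (log 2 p) l \<le> 2 ^ l * real (rsize s)"
    by blast+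
  have "real (card (lang (Union r s))) \<le> real (card (lang r)) + real (card (lang s))"
    using card_Un_le[of "lang r" "lang s"] by simp
  then have "real (card (lang (Union r s))) * weight (log 2 p) l
      \<le> (real (card (lang r)) + real (card (lang s))) * weight (log 2 p) l"
    by (rule mult_right_mono) (rule weight_nonneg)
  also have "\<dots> \<le> 2 ^ l * real (rsize r) + 2 ^ l * real (rsize s)"
    using IH by (simp add: distrib_right add_mono)
  also have "\<dots> \<le> 2 ^ l * real (rsize (Union r s))"
    by (simp add: distrib_left)
  finally show ?case .
next
  case (Conc r s)
  obtain x y where xy: "x \<in> lang r" "y \<in> lang s"
    using lang_nonempty by blast
  define a b where "a = length x" and "b = length y"
  have hom: "homogeneous p a (lang r)" "homogeneous p b (lang s)"
    using homogeneous_conc[OF assms(1) _ xy] Conc.prems unfolding a_def b_def by simp_all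
  have "x @ y \<in> lang (Conc r s)"
    using xy by auto
  then have "length (x @ y) = l"
    using Conc.prems unfolding homogeneous_def by blast
  then have l: "l = a + b"
    by (simp add: a_def b_def)
  have card: "card (lang (Conc r s)) = card (lang r) * card (lang s)"
    using card_conc[OF finite_lang finite_lang, of r a s] hom(1) by (simp add: homogeneous_def)
  have "p > 0"
    using assms(2) by simp
  note IH = Conc.IH(1)[OF hom(1)] Conc.IH(2)[OF hom(2)]
  note bound = card_homogeneous_mult_less[OF \<open>p > 0\<close> hom(1)]
    card_homogeneous_mult_less[OF \<open>p > 0\<close> hom(2)]
  show ?case
  proof (cases "b \<le> a")
    case True
    have "real (card (lang (Conc r s))) * weight (log 2 p) l \<le> 2 ^ l * real (rsize r)"
      using conc_weight_le[OF assms(2) True IH(1) bound(2)] unfolding card l .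
    then show ?thesis
      by (simp add: order_trans)
  next
    case False
    then have "a \<le> b"
      by simp
    have "real (card (lang (Conc r s))) * weight (log 2 p) l \<le> 2 ^ l * real (rsize s)"
      using conc_weight_le[OF assms(2) \<open>a \<le> b\<close> IH(2) bound(1)] unfolding card l by (simp only: ac_simps)
    then show ?thesis
      by (simp add: order_trans)
  qed
qed

lemma weight_div_le_rpn_Ldiv:
  assumes "odd p" "p \<ge> 2"
  shows "weight (log 2 p) n / p \<le> rpn (Ldiv n p)"
proof -
  have "to_bin n 0 \<in> Ldiv n p"
    by (simp add: Ldiv_def bin_to_bin)
  then obtain r where r: "lang r = Ldiv n p" "rsize r = rpn (Ldiv n p)"
    using rpn_attained[OF finite_Ldiv] by blast
  have "(2::real) ^ n \<le> real (card (Ldiv n p)) * p"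
    using card_Ldiv_mult_ge[of p n] assms(2) of_nat_le_iff[of "2 ^ n" "card (Ldiv n p) * p"] by simp
  then have "2 ^ n * weight (log 2 p) n \<le> real (card (Ldiv n p)) * p * weight (log 2 p) n"
    by (rule mult_right_mono[OF _ weight_nonneg])
  also have "\<dots> = p * (real (card (Ldiv n p)) * weight (log 2 p) n)"
    by simp
  also have "\<dots> \<le> real p * (2 ^ n * real (rpn (Ldiv n p)))"
    using card_lang_weight_le[OF assms homogeneous_Ldiv[of p n, folded r(1)]] r
    by (intro mult_left_mono) simp_all
  finally have "weight (log 2 p) n \<le> real p * real (rpn (Ldiv n p))"
    by simp
  then show ?thesis
    using assms(2) by (simp add: divide_le_eq ac_simps)
qed

lemma powr_log_le_weight_div:
  assumes "p > 2" "n \<ge> 1"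
  shows "1 / real n * real p powr (log 2 (real n / log 2 p) - 2) \<le> weight (log 2 p) n / p"
proof -
  define L where "L = log 2 p"
  define x where "x = real n / L"
  have L: "L > 1" "2 powr L = p"
    using assms(1) by (simp_all add: L_def)
  have x: "x > 0"
    using L assms(2) by (simp add: x_def)
  have "real p powr log 2 x = (2 powr log 2 x) powr L"
    unfolding L(2)[symmetric] by (simp add: powr_powr mult.commute)
  also have "\<dots> = x powr (L - 1) * x"
    using x by (simp add: powr_diff)
  finally have "real p powr (log 2 x - 2) = x powr (L - 1) * x / p\<^sup>2"
    by (simp add: powr_diff)
  then have "1 / real n * real p powr (log 2 x - 2) = x powr (L - 1) / (L * p\<^sup>2)"
    using L assms(2) by (simp add: x_def)
  also have "\<dots> \<le> 2 * x powr (L - 1) / p\<^sup>2"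
    using L assms(1) by (intro frac_le) auto
  also have "\<dots> = (x / 2) powr (L - 1) / p"
    using L by (simp add: powr_divide powr_diff power2_eq_square ac_simps)
  also have "\<dots> \<le> weight L n / p"
    unfolding weight_def x_def using L by (intro divide_right_mono powr_mono2) auto
  finally show ?thesis
    by (simp add: x_def L_def)
qed

theorem theorem7p1:
  shows "\<exists>c>0. \<forall>(p::nat) (n::nat). odd p \<longrightarrow> p > 2 \<longrightarrow> n \<ge> 1 \<longrightarrow>
     real (rpn (Ldiv n p)) \<ge> c * (1 / real n) * real p powr (log 2 (real n / log 2 (real p)) - 2)"
proof (intro exI[of _ 1] conjI allI impI)
  fix p n :: nat
  assume "odd p" "p > 2" "n \<ge> 1"
  then show "1 * (1 / real n) * real p powr (log 2 (real n / log 2 (real p)) - 2) \<le> real (rpn (Ldiv n p))"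
    using powr_log_le_weight_div[of p n] weight_div_le_rpn_Ldiv[of p n] by simp
qed simp

end
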